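(* Assume the setting in the context and the condition $2c_3^2\tau^{1-\theta\alpha}\le c_0\beta^{\alpha}\epsilon$. Then there exist constants $\tilde c_1,\tilde c_2>0$, independent of $\beta,\theta,\tau$ and $\epsilon^{-1}$, such that for all $u,v\in\mathbb{R}$: \[ 2(u+v)f_\tau(u)+\tau\epsilon^{-1}|f_\tau(u)|^2\le-\frac{c_0}{2(1+\beta\tau^{\theta})^{2\alpha}}|u|^2+\tilde c_1(1+|v|^{2q})+\tilde c_2\beta^{\alpha}\tau^{\theta\alpha}, \] \[ |f_\tau(u)|\le|f(u)|,\qquad |f_\tau(u)-f(u)|\le\alpha\beta\tau^{\theta}|u|^{\frac{2q-2}{\alpha}}|f(u)|. \]
   Context: Let $q>1$ be an integer and $f(v)=-c_fv^{2q-1}+f_0(v)$, $v\in\mathbb{R}$, with $c_f>0$ and $f_0$ twice differentiable satisfying $|f_0(v)|\le c_{f,0}(1+|v|^{2q-2})$ and $|f_0'(v)|+|f_0''(v)|\le c_{f,1}(1+|v|^{2q-3})$. Fix constants $c_0,\dots,c_5>0$ such that $(u+v)f(u)\le-c_0|u|^{2q}+c_1|v|^{2q}+c_2$ and $|f(u)|\le c_3|u|^{2q-1}+c_4|u|+c_5$ for all $u,v\in\mathbb{R}$. Let $\epsilon\in(0,1]$, $\tau>0$, $\beta,\theta>0$, $\alpha\in(0,1/\theta)$, and $f_\tau(v):=f(v)/(1+\beta\tau^{\theta}|v|^{(2q-2)/\alpha})^{\alpha}$. *)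

theory Defs
  imports Complex_Main
begin

definition ftau :: "(real \<Rightarrow> real) \<Rightarrow> nat \<Rightarrow> real \<Rightarrow> real \<Rightarrow> real \<Rightarrow> real \<Rightarrow> real \<Rightarrow> real" where
  "ftau f q \<alpha> \<beta> \<theta> \<tau> v =
     f v / (1 + \<beta> * \<tau> powr \<theta> * \<bar>v\<bar> powr ((2 * real q - 2) / \<alpha>)) powr \<alpha>"

end

theory Submission
  imports Defs
begin

(* Write f_tau(u) = f(u) / D with D = (1 + s |u|^((2q-2)/alpha))^alpha and s = beta tau^theta.
   The last two bounds are D >= 1 and Bernoulli's inequality 1 - (1+x)^(-alpha) <= alpha x.
   For the first one, dissipativity of f gives 2(u+v) f(u) / D <= -2 c0 |u|^(2q) / D + ..., and
   since D >= s^alpha |u|^(2q-2), the step condition c3^2 tau / eps <= c0 s^alpha / 2 bounds the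
   leading part of (tau / eps) |f(u)|^2 / D^2 by (3/4) c0 |u|^(2q) / D.  The remaining
   -c0 |u|^(2q) / D still dominates -c0 |u|^2 / (1+s)^alpha up to a constant, because
   D <= |u|^(2q-2) (1+s)^alpha for |u| >= 1. *)

lemma one_minus_le_powr_neg:
  fixes x a :: real
  assumes "x > -1" "a \<ge> 0"
  shows "1 - a * x \<le> (1 + x) powr (- a)"
proof -
  have "1 - a * ln (1 + x) \<le> exp (- a * ln (1 + x))"
    using exp_ge_add_one_self[of "- a * ln (1 + x)"] by simp
  also have "\<dots> = (1 + x) powr (- a)" using assms by (simp add: powr_def)
  finally show ?thesis
    using mult_left_mono[OF ln_add_one_self_le_self2[OF assms(1)] assms(2)] by linarith
qed

lemma abs_div_powr_le:
  fixes x y \<alpha> :: real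
  assumes "x \<ge> 0" "\<alpha> \<ge> 0"
  shows "\<bar>y / (1 + x) powr \<alpha>\<bar> \<le> \<bar>y\<bar>"
proof -
  have "1 \<le> (1 + x) powr \<alpha>" using assms by (intro ge_one_powr_ge_zero) auto
  then show ?thesis by (simp add: abs_div divide_le_eq mult_le_cancel_left1)
qed

lemma abs_div_powr_minus_le:
  fixes x y \<alpha> :: real
  assumes "x \<ge> 0" "\<alpha> \<ge> 0"
  shows "\<bar>y / (1 + x) powr \<alpha> - y\<bar> \<le> \<alpha> * x * \<bar>y\<bar>"
proof -
  have "(1 + x) powr (- \<alpha>) \<le> 1" using assms by (simp add: powr_minus_divide ge_one_powr_ge_zero)
  moreover have "y / (1 + x) powr \<alpha> - y = - (y * (1 - (1 + x) powr (- \<alpha>)))"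
    by (simp add: powr_minus_divide algebra_simps)
  ultimately have "\<bar>y / (1 + x) powr \<alpha> - y\<bar> = \<bar>y\<bar> * (1 - (1 + x) powr (- \<alpha>))"
    by (simp add: abs_mult)
  also have "\<dots> \<le> \<bar>y\<bar> * (\<alpha> * x)"
    using one_minus_le_powr_neg[of x \<alpha>] assms by (intro mult_left_mono) auto
  finally show ?thesis by (simp add: mult_ac)
qed

lemma power2_le_of_abs_le_add:
  fixes F A B :: real
  assumes "\<bar>F\<bar> \<le> A + B"
  shows "F\<^sup>2 \<le> 3/2 * A\<^sup>2 + 3 * B\<^sup>2"
proof -
  have "F\<^sup>2 \<le> (A + B)\<^sup>2" using assms by (metis abs_ge_zero abs_le_square_iff abs_of_nonneg order_trans)
  also have "\<dots> \<le> 3/2 * A\<^sup>2 + 3 * B\<^sup>2"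
    using zero_le_square[of "A - 2 * B"] by (simp add: power2_eq_square algebra_simps)
  finally show ?thesis .
qed

lemma power2_le_power_add_one:
  fixes a :: real
  assumes "n \<ge> 2" "a \<ge> 0"
  shows "a\<^sup>2 \<le> a ^ n + 1"
proof (cases "a \<le> 1")
  case True
  then show ?thesis using assms by (smt (verit) power_le_one zero_le_power)
next
  case False
  then have "a\<^sup>2 \<le> a ^ n" using assms by (intro power_increasing) auto
  then show ?thesis by simp
qed

lemma tamed_leading_square_le:
  fixes a D P T c0 c3 :: real
  assumes a: "a \<ge> 0" and c0: "c0 \<ge> 0"
    and PD: "P * a ^ n \<le> D" and cT: "c3\<^sup>2 * T \<le> c0 * P / 2"
  shows "T * (c3 * a ^ (n + 1))\<^sup>2 \<le> c0 / 2 * a ^ (n + 2) * D"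
proof -
  have "T * (c3 * a ^ (n + 1))\<^sup>2 = (c3\<^sup>2 * T) * (a ^ (n + 2) * a ^ n)"
    by (simp add: power_mult_distrib flip: power_add power_mult) (simp add: mult_2_right)
  also have "\<dots> \<le> (c0 * P / 2) * (a ^ (n + 2) * a ^ n)"
    using cT a by (intro mult_right_mono) auto
  also have "\<dots> = c0 / 2 * a ^ (n + 2) * (P * a ^ n)" by simp
  also have "\<dots> \<le> c0 / 2 * a ^ (n + 2) * D"
    using PD c0 a by (intro mult_left_mono) auto
  finally show ?thesis .
qed

lemma tamed_lower_square_le:
  fixes a D P T c0 c3 c4 c5 :: real
  assumes n: "n \<ge> 2" and a: "a \<ge> 0" and D: "D \<ge> 1" and P: "P \<ge> 0" and T: "T \<ge> 0"
    and c0: "c0 \<ge> 0" and c3: "c3 > 0"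
    and PD: "P * a ^ n \<le> D" and cT: "c3\<^sup>2 * T \<le> c0 * P / 2"
  shows "T * (c4 * a + c5)\<^sup>2 \<le> c0 / c3\<^sup>2 * (c4\<^sup>2 * (1 + P) + c5\<^sup>2 * P) * D\<^sup>2"
proof -
  have DD: "D \<le> D\<^sup>2" using D by (simp add: power2_eq_square)
  have PDD: "P \<le> P * D\<^sup>2" using mult_left_mono[of 1 "D\<^sup>2" P] D DD P by simp
  have "P * a\<^sup>2 \<le> P * a ^ n + P"
    using mult_left_mono[OF power2_le_power_add_one[OF n a] P] by (simp add: distrib_left)
  then have PaD: "P * a\<^sup>2 \<le> (1 + P) * D\<^sup>2" using PD DD PDD by (simp add: distrib_right)
  have "T * (c4 * a + c5)\<^sup>2 \<le> T * (2 * c4\<^sup>2 * a\<^sup>2 + 2 * c5\<^sup>2)"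
    using T zero_le_square[of "c4 * a - c5"]
    by (intro mult_left_mono) (simp_all add: power2_eq_square algebra_simps)
  also have "\<dots> \<le> c0 * P / (2 * c3\<^sup>2) * (2 * c4\<^sup>2 * a\<^sup>2 + 2 * c5\<^sup>2)"
    using cT c3 by (intro mult_right_mono) (simp_all add: field_simps)
  also have "\<dots> = c0 / c3\<^sup>2 * (c4\<^sup>2 * (P * a\<^sup>2) + c5\<^sup>2 * P)"
    using c3 by (simp add: field_simps)
  also have "\<dots> \<le> c0 / c3\<^sup>2 * (c4\<^sup>2 * ((1 + P) * D\<^sup>2) + c5\<^sup>2 * (P * D\<^sup>2))"
    using PaD PDD c0 by (intro mult_left_mono add_mono) auto
  also have "\<dots> = c0 / c3\<^sup>2 * (c4\<^sup>2 * (1 + P) + c5\<^sup>2 * P) * D\<^sup>2"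
    by (simp add: algebra_simps)
  finally show ?thesis .
qed

lemma tamed_square_le:
  fixes a D P T F c0 c3 c4 c5 :: real
  assumes n: "n \<ge> 2" and a: "a \<ge> 0" and D: "D \<ge> 1" and P: "P \<ge> 0" and T: "T \<ge> 0"
    and c0: "c0 \<ge> 0" and c3: "c3 > 0"
    and PD: "P * a ^ n \<le> D" and cT: "c3\<^sup>2 * T \<le> c0 * P / 2"
    and F: "\<bar>F\<bar> \<le> c3 * a ^ (n + 1) + c4 * a + c5"
  shows "T * (F / D)\<^sup>2 \<le> 3/4 * c0 * a ^ (n + 2) / D + 3 * c0 / c3\<^sup>2 * (c4\<^sup>2 * (1 + P) + c5\<^sup>2 * P)"
proof -
  define K where "K = c0 / c3\<^sup>2 * (c4\<^sup>2 * (1 + P) + c5\<^sup>2 * P)"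
  have "T * (F / D)\<^sup>2 = T * F\<^sup>2 / D\<^sup>2" by (simp add: power_divide)
  also have "\<dots> \<le> (3/2 * (T * (c3 * a ^ (n + 1))\<^sup>2) + 3 * (T * (c4 * a + c5)\<^sup>2)) / D\<^sup>2"
    using mult_left_mono[OF power2_le_of_abs_le_add[of F "c3 * a ^ (n + 1)" "c4 * a + c5"] T] F
    by (intro divide_right_mono) (simp_all add: algebra_simps)
  also have "\<dots> \<le> (3/4 * c0 * a ^ (n + 2) * D + 3 * K * D\<^sup>2) / D\<^sup>2"
    using tamed_leading_square_le[OF a c0 PD cT] tamed_lower_square_le[OF assms(1-9), of c4 c5]
    by (intro divide_right_mono) (auto simp: K_def)
  also have "\<dots> = 3/4 * c0 * a ^ (n + 2) / D + 3 * K"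
    using D by (simp add: field_simps power2_eq_square)
  finally show ?thesis by (simp add: K_def)
qed

lemma power_le_taming_factor:
  fixes s a \<alpha> :: real
  assumes "s \<ge> 0" "a \<ge> 0" "\<alpha> > 0" "n \<noteq> 0"
  shows "s powr \<alpha> * a ^ n \<le> (1 + s * a powr (n / \<alpha>)) powr \<alpha>"
proof -
  have "s powr \<alpha> * a ^ n = (s * a powr (n / \<alpha>)) powr \<alpha>"
    using assms by (simp add: powr_mult powr_powr powr_realpow')
  also have "\<dots> \<le> (1 + s * a powr (n / \<alpha>)) powr \<alpha>"
    using assms by (intro powr_mono2) auto
  finally show ?thesis .
qed

lemma taming_factor_le_power:
  fixes s a \<alpha> :: real
  assumes "s \<ge> 0" "a \<ge> 1" "\<alpha> > 0"
  shows "(1 + s * a powr (n / \<alpha>)) powr \<alpha> \<le> a ^ n * (1 + s) powr \<alpha>"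
proof -
  have "1 \<le> a powr (n / \<alpha>)" using assms by (intro ge_one_powr_ge_zero) auto
  then have "1 + s * a powr (n / \<alpha>) \<le> a powr (n / \<alpha>) * (1 + s)"
    using assms by (simp add: algebra_simps)
  then have "(1 + s * a powr (n / \<alpha>)) powr \<alpha> \<le> (a powr (n / \<alpha>) * (1 + s)) powr \<alpha>"
    using assms by (intro powr_mono2) auto
  also have "\<dots> = a ^ n * (1 + s) powr \<alpha>"
    using assms by (simp add: powr_mult powr_powr powr_realpow)
  finally show ?thesis .
qed

lemma power2_div_powr_le:
  fixes s a \<alpha> :: real
  assumes s: "s \<ge> 0" and a: "a \<ge> 0" and \<alpha>: "\<alpha> > 0"
  shows "a\<^sup>2 / (1 + s) powr \<alpha> \<le> a ^ (n + 2) / (1 + s * a powr (n / \<alpha>)) powr \<alpha> + 1"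
proof -
  have E: "1 \<le> (1 + s) powr \<alpha>" and D: "1 \<le> (1 + s * a powr (n / \<alpha>)) powr \<alpha>"
    using assms by (simp_all add: ge_one_powr_ge_zero)
  show ?thesis
  proof (cases "a \<le> 1")
    case True
    then have "a\<^sup>2 \<le> 1" using a by (simp add: power_le_one)
    then have "a\<^sup>2 / (1 + s) powr \<alpha> \<le> 1" using E by (auto simp: divide_le_eq_1)
    moreover have "0 \<le> a ^ (n + 2) / (1 + s * a powr (n / \<alpha>)) powr \<alpha>" using a by simp
    ultimately show ?thesis by linarith
  next
    case False
    then have "a\<^sup>2 / (1 + s) powr \<alpha> = a ^ (n + 2) / (a ^ n * (1 + s) powr \<alpha>)"
      by (simp add: power_add power2_eq_square)
    also have "\<dots> \<le> a ^ (n + 2) / (1 + s * a powr (n / \<alpha>)) powr \<alpha>"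
      using taming_factor_le_power[OF s _ \<alpha>, of a n] False D E a
      by (intro divide_left_mono) (auto intro!: mult_pos_pos)
    finally show ?thesis by linarith
  qed
qed

lemma weighted_power2_div_powr_le:
  fixes s a \<alpha> c :: real
  assumes s: "s \<ge> 0" and a: "a \<ge> 0" and \<alpha>: "\<alpha> > 0" and c: "c \<ge> 0"
  shows "c / (2 * (1 + s) powr (2 * \<alpha>)) * a\<^sup>2 \<le> c * a ^ (n + 2) / (1 + s * a powr (n / \<alpha>)) powr \<alpha> + c"
proof -
  have E: "1 \<le> (1 + s) powr \<alpha>" using s \<alpha> by (simp add: ge_one_powr_ge_zero)
  have "(1 + s) powr (2 * \<alpha>) = (1 + s) powr \<alpha> * (1 + s) powr \<alpha>"
    by (simp flip: powr_add)
  then have "(1 + s) powr \<alpha> \<le> 2 * (1 + s) powr (2 * \<alpha>)"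
    using E mult_left_mono[OF E, of "(1 + s) powr \<alpha>"] by simp
  then have "c / (2 * (1 + s) powr (2 * \<alpha>)) \<le> c / (1 + s) powr \<alpha>"
    using c E s by (intro divide_left_mono) auto
  then have "c / (2 * (1 + s) powr (2 * \<alpha>)) * a\<^sup>2 \<le> c / (1 + s) powr \<alpha> * a\<^sup>2"
    by (rule mult_right_mono) simp
  also have "\<dots> = c * (a\<^sup>2 / (1 + s) powr \<alpha>)" by simp
  also have "\<dots> \<le> c * a ^ (n + 2) / (1 + s * a powr (n / \<alpha>)) powr \<alpha> + c"
    using mult_left_mono[OF power2_div_powr_le[OF s a \<alpha>, of n] c] by (simp add: distrib_left)
  finally show ?thesis .
qed

lemma divide_le_neg_divide_add:
  fixes w A B D :: real
  assumes "w \<le> - A + B" "B \<ge> 0" "D \<ge> 1"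
  shows "w / D \<le> - A / D + B"
proof -
  have "w / D \<le> (- A + B) / D" using assms by (intro divide_right_mono) auto
  also have "\<dots> = - A / D + B / D" by (simp add: diff_divide_distrib)
  also have "B / D \<le> B" using assms by (simp add: divide_le_eq mult_le_cancel_left1)
  finally show ?thesis by simp
qed

lemma step_condition_rescaled:
  fixes \<alpha> \<beta> \<theta> \<tau> \<epsilon> c0 c3 :: real
  assumes \<tau>: "\<tau> > 0" and \<epsilon>: "\<epsilon> > 0"
    and step: "2 * c3\<^sup>2 * \<tau> powr (1 - \<theta> * \<alpha>) \<le> c0 * \<beta> powr \<alpha> * \<epsilon>"
  shows "c3\<^sup>2 * (\<tau> / \<epsilon>) \<le> c0 * (\<beta> powr \<alpha> * \<tau> powr (\<theta> * \<alpha>)) / 2"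
proof -
  have "c3\<^sup>2 * (\<tau> / \<epsilon>) = 2 * c3\<^sup>2 * \<tau> powr (1 - \<theta> * \<alpha>) * \<tau> powr (\<theta> * \<alpha>) / (2 * \<epsilon>)"
    using \<tau> by (simp flip: powr_add)
  also have "\<dots> \<le> c0 * \<beta> powr \<alpha> * \<epsilon> * \<tau> powr (\<theta> * \<alpha>) / (2 * \<epsilon>)"
    using step \<epsilon> by (intro divide_right_mono mult_right_mono) auto
  also have "\<dots> = c0 * (\<beta> powr \<alpha> * \<tau> powr (\<theta> * \<alpha>)) / 2" using \<epsilon> by simp
  finally show ?thesis .
qed

lemma ftau_dissipative:
  fixes f :: "real \<Rightarrow> real" and q :: nat and \<alpha> \<beta> \<theta> \<tau> \<epsilon> c0 c1 c2 c3 c4 c5 u v :: real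
  assumes q: "q > 1" and \<alpha>: "\<alpha> > 0" and \<beta>: "\<beta> > 0" and \<tau>: "\<tau> > 0" and \<epsilon>: "\<epsilon> > 0"
    and step: "2 * c3\<^sup>2 * \<tau> powr (1 - \<theta> * \<alpha>) \<le> c0 * \<beta> powr \<alpha> * \<epsilon>"
    and c: "c0 > 0" "c1 \<ge> 0" "c2 \<ge> 0" "c3 > 0"
    and diss: "(u + v) * f u \<le> - c0 * \<bar>u\<bar> ^ (2 * q) + c1 * \<bar>v\<bar> ^ (2 * q) + c2"
    and growth: "\<bar>f u\<bar> \<le> c3 * \<bar>u\<bar> ^ (2 * q - 1) + c4 * \<bar>u\<bar> + c5"
  shows "2 * (u + v) * ftau f q \<alpha> \<beta> \<theta> \<tau> u + \<tau> / \<epsilon> * \<bar>ftau f q \<alpha> \<beta> \<theta> \<tau> u\<bar>\<^sup>2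
    \<le> - c0 / (2 * (1 + \<beta> * \<tau> powr \<theta>) powr (2 * \<alpha>)) * \<bar>u\<bar>\<^sup>2
       + (c0 + 2 * c1 + 2 * c2 + 3 * c0 * c4\<^sup>2 / c3\<^sup>2) * (1 + \<bar>v\<bar> ^ (2 * q))
       + 3 * c0 * (c4\<^sup>2 + c5\<^sup>2) / c3\<^sup>2 * \<beta> powr \<alpha> * \<tau> powr (\<theta> * \<alpha>)"
proof -
  define n where "n = 2 * q - 2"
  define s where "s = \<beta> * \<tau> powr \<theta>"
  define a where "a = \<bar>u\<bar>"
  define D where "D = (1 + s * a powr (n / \<alpha>)) powr \<alpha>"
  define P where "P = s powr \<alpha>"
  define V where "V = \<bar>v\<bar> ^ (2 * q)"
  define X where "X = c0 * a ^ (n + 2) / D"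
  define K4 where "K4 = 3 * c0 * c4\<^sup>2 / c3\<^sup>2"
  define K5 where "K5 = 3 * c0 * c5\<^sup>2 / c3\<^sup>2"
  define G where "G = c0 / (2 * (1 + s) powr (2 * \<alpha>)) * a\<^sup>2"
  have n: "n \<ge> 2" "n \<noteq> 0" "2 * q = n + 2" "2 * q - 1 = n + 1" "2 * real q - 2 = n"
    using q by (auto simp: n_def of_nat_diff)
  have s: "s \<ge> 0" and a: "a \<ge> 0" and V: "V \<ge> 0" using \<beta> by (simp_all add: s_def a_def V_def)
  have D: "D \<ge> 1" using s \<alpha> by (simp add: D_def ge_one_powr_ge_zero)
  have X: "X \<ge> 0" using c a D by (simp add: X_def)
  have ftau_eq: "ftau f q \<alpha> \<beta> \<theta> \<tau> u = f u / D"
    by (simp add: ftau_def D_def s_def a_def n)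
  have P_eq: "\<beta> powr \<alpha> * \<tau> powr (\<theta> * \<alpha>) = P"
    by (simp add: P_def s_def powr_mult powr_powr mult.commute)
  have step': "c3\<^sup>2 * (\<tau> / \<epsilon>) \<le> c0 * P / 2"
    using step_condition_rescaled[OF \<tau> \<epsilon> step] by (simp add: P_eq)
  have drift: "2 * (u + v) * f u / D \<le> - 2 * X + 2 * c1 * V + 2 * c2"
    using divide_le_neg_divide_add[of "2 * (u + v) * f u" "2 * c0 * a ^ (n + 2)" "2 * (c1 * V + c2)" D]
      diss D c V
    unfolding a_def V_def X_def n(3)[symmetric] by (simp add: algebra_simps)
  have square: "\<tau> / \<epsilon> * (f u / D)\<^sup>2 \<le> 3/4 * X + K4 * (1 + P) + K5 * P"
  proof -
    have "P * a ^ n \<le> D"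
      unfolding P_def D_def by (rule power_le_taming_factor[OF s a \<alpha> n(2)])
    moreover have "\<bar>f u\<bar> \<le> c3 * a ^ (n + 1) + c4 * a + c5"
      using growth unfolding a_def n(4)[symmetric] .
    moreover have "P \<ge> 0" "\<tau> / \<epsilon> \<ge> 0" using \<tau> \<epsilon> by (simp_all add: P_def)
    ultimately have "\<tau> / \<epsilon> * (f u / D)\<^sup>2
        \<le> 3/4 * c0 * a ^ (n + 2) / D + 3 * c0 / c3\<^sup>2 * (c4\<^sup>2 * (1 + P) + c5\<^sup>2 * P)"
      using c by (intro tamed_square_le[OF n(1) a D _ _ _ _ _ step']) auto
    also have "\<dots> = 3/4 * X + K4 * (1 + P) + K5 * P"
      by (simp add: X_def K4_def K5_def algebra_simps add_divide_distrib)
    finally show ?thesis .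
  qed
  have coercive: "G \<le> X + c0"
    using weighted_power2_div_powr_le[OF s a \<alpha>, of c0 n] c by (simp add: G_def X_def D_def)
  have K: "K4 \<ge> 0" "(c0 + 2 * c2 + K4) * V \<ge> 0" using c V by (simp_all add: K4_def)
  have "2 * (u + v) * ftau f q \<alpha> \<beta> \<theta> \<tau> u + \<tau> / \<epsilon> * \<bar>ftau f q \<alpha> \<beta> \<theta> \<tau> u\<bar>\<^sup>2
      = 2 * (u + v) * f u / D + \<tau> / \<epsilon> * (f u / D)\<^sup>2"
    by (simp only: ftau_eq power2_abs times_divide_eq_right)
  also have "\<dots> \<le> - 5/4 * X + 2 * c1 * V + 2 * c2 + K4 * (1 + P) + K5 * P"
    using drift square by simp
  also have "\<dots> \<le> - G + (c0 + 2 * c1 + 2 * c2 + K4) * (1 + V) + (K4 + K5) * P"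
    using coercive X K c by (simp add: algebra_simps)
  finally show ?thesis
    by (simp add: G_def K4_def K5_def s_def a_def V_def algebra_simps add_divide_distrib flip: P_eq)
qed

lemma abs_ftau_le:
  assumes "\<beta> \<ge> 0" "\<alpha> \<ge> 0"
  shows "\<bar>ftau f q \<alpha> \<beta> \<theta> \<tau> u\<bar> \<le> \<bar>f u\<bar>"
  unfolding ftau_def using assms by (intro abs_div_powr_le) auto

lemma abs_ftau_minus_le:
  assumes "\<beta> \<ge> 0" "\<alpha> \<ge> 0"
  shows "\<bar>ftau f q \<alpha> \<beta> \<theta> \<tau> u - f u\<bar>
    \<le> \<alpha> * \<beta> * \<tau> powr \<theta> * \<bar>u\<bar> powr ((2 * real q - 2) / \<alpha>) * \<bar>f u\<bar>"
  using abs_div_powr_minus_le[of "\<beta> * \<tau> powr \<theta> * \<bar>u\<bar> powr ((2 * real q - 2) / \<alpha>)" \<alpha> "f u"] assms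
  by (simp add: ftau_def mult_ac)

theorem proposition3p2:
  fixes q :: nat and cf cf0 cf1 c0 c1 c2 c3 c4 c5 \<alpha> :: real
    and f f0 :: "real \<Rightarrow> real"
  assumes hq: "q > 1"
    and hcf: "cf > 0" and hcf0: "cf0 > 0" and hcf1: "cf1 > 0"
    and hf: "\<And>v. f v = - cf * v ^ (2 * q - 1) + f0 v"
    and hf0diff: "\<exists>f0' f0''. \<forall>v. (f0 has_real_derivative f0' v) (at v)
                     \<and> (f0' has_real_derivative f0'' v) (at v)
                     \<and> \<bar>f0' v\<bar> + \<bar>f0'' v\<bar> \<le> cf1 * (1 + \<bar>v\<bar> ^ (2 * q - 3))"
    and hf0: "\<And>v. \<bar>f0 v\<bar> \<le> cf0 * (1 + \<bar>v\<bar> ^ (2 * q - 2))"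
    and hc: "c0 > 0" "c1 > 0" "c2 > 0" "c3 > 0" "c4 > 0" "c5 > 0"
    and hdiss: "\<And>u v. (u + v) * f u \<le> - c0 * \<bar>u\<bar> ^ (2 * q) + c1 * \<bar>v\<bar> ^ (2 * q) + c2"
    and hgrowth: "\<And>u. \<bar>f u\<bar> \<le> c3 * \<bar>u\<bar> ^ (2 * q - 1) + c4 * \<bar>u\<bar> + c5"
    and h\<alpha>: "\<alpha> > 0"
  shows "\<exists>ct1 ct2. ct1 > 0 \<and> ct2 > 0 \<and>
    (\<forall>\<beta> \<theta> \<tau> \<epsilon>. \<beta> > 0 \<and> \<theta> > 0 \<and> \<tau> > 0 \<and> 0 < \<epsilon> \<and> \<epsilon> \<le> 1 \<and> \<alpha> < 1 / \<theta>
       \<and> 2 * c3 ^ 2 * \<tau> powr (1 - \<theta> * \<alpha>) \<le> c0 * \<beta> powr \<alpha> * \<epsilon> \<longrightarrow>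
      (\<forall>u v.
         2 * (u + v) * ftau f q \<alpha> \<beta> \<theta> \<tau> u + \<tau> / \<epsilon> * \<bar>ftau f q \<alpha> \<beta> \<theta> \<tau> u\<bar> ^ 2
           \<le> - c0 / (2 * (1 + \<beta> * \<tau> powr \<theta>) powr (2 * \<alpha>)) * \<bar>u\<bar> ^ 2
              + ct1 * (1 + \<bar>v\<bar> ^ (2 * q)) + ct2 * \<beta> powr \<alpha> * \<tau> powr (\<theta> * \<alpha>)
       \<and> \<bar>ftau f q \<alpha> \<beta> \<theta> \<tau> u\<bar> \<le> \<bar>f u\<bar>
       \<and> \<bar>ftau f q \<alpha> \<beta> \<theta> \<tau> u - f u\<bar>
           \<le> \<alpha> * \<beta> * \<tau> powr \<theta> * \<bar>u\<bar> powr ((2 * real q - 2) / \<alpha>) * \<bar>f u\<bar>))"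
proof -
  define ct1 where "ct1 = c0 + 2 * c1 + 2 * c2 + 3 * c0 * c4\<^sup>2 / c3\<^sup>2"
  define ct2 where "ct2 = 3 * c0 * (c4\<^sup>2 + c5\<^sup>2) / c3\<^sup>2"
  have "ct1 > 0" "ct2 > 0" using hc by (simp_all add: ct1_def ct2_def add_pos_nonneg)
  moreover note ftau_dissipative[where f = f, OF hq h\<alpha> _ _ _ _ hc(1) _ _ hc(4) hdiss hgrowth]
    abs_ftau_le abs_ftau_minus_le
  ultimately show ?thesis
    using hc h\<alpha> by (intro exI[of _ ct1] exI[of _ ct2]) (auto simp: ct1_def ct2_def)
qed

end
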